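(* Let $X=(X_n)_{n\in\mathbb{Z}}$ be a stationary sequence of integer-valued random variables and, for $n\in\mathbb{Z}$, let $\mathbb{Z}^R_X(n)$ be the connected component of $n$ in the record graph of $X$. Then $$\mathbb{P}[\mathbb{Z}^R_X(0)\text{ is finite}]=\mathbb{P}[\mathbb{Z}^R_X(n)\text{ is finite for all } n\ge1]=\mathbb{P}[\mathbb{Z}^R_X(n)\text{ is finite for all }n\le-1].$$
   Context: For a sequence $x=(x_n)_{n\in\mathbb{Z}}$, the record map is $R_x(i)=\inf\{n>i: \sum_{l=i}^{n-1}x_l\ge0\}$ if this set is nonempty, and $R_x(i)=i$ otherwise. The record graph has vertex set $\mathbb{Z}$ and a directed edge $i\to R_x(i)$ whenever $R_x(i)\ne i$; components are in the undirected sense. *)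

theory Defs
  imports "HOL-Probability.Probability"
begin

definition record_map :: "(int \<Rightarrow> int) \<Rightarrow> int \<Rightarrow> int" where
  "record_map x i =
     (if \<exists>n>i. (\<Sum>l\<in>{i..<n}. x l) \<ge> 0
      then (LEAST n. n > i \<and> (\<Sum>l\<in>{i..<n}. x l) \<ge> 0)
      else i)"

definition record_edges :: "(int \<Rightarrow> int) \<Rightarrow> (int \<times> int) set" where
  "record_edges x = {(i, record_map x i) | i. record_map x i \<noteq> i}"

definition record_component :: "(int \<Rightarrow> int) \<Rightarrow> int \<Rightarrow> int set" where
  "record_component x n = {m. (n, m) \<in> (record_edges x \<union> (record_edges x)\<inverse>)\<^sup>*}"

definition stationary_int_process :: "'a measure \<Rightarrow> (int \<Rightarrow> 'a \<Rightarrow> int) \<Rightarrow> bool" where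
  "stationary_int_process M X \<longleftrightarrow>
     (\<forall>n. X n \<in> measurable M (count_space UNIV)) \<and>
     (\<forall>k. distr M (PiM UNIV (\<lambda>_. count_space UNIV)) (\<lambda>\<omega> n. X (n + k) \<omega>)
        = distr M (PiM UNIV (\<lambda>_. count_space UNIV)) (\<lambda>\<omega> n. X n \<omega>))"

end

theory Submission
  imports Defs
begin

(* An edge i -> R(i) of the record graph spans the interval [i, R(i)], and every j strictly inside
   it has its own record R(j) in (j, R(i)]; following records upwards from j therefore reaches R(i).
   Hence components are intervals of integers, and an infinite component is either all of Z, a ray
   [m, oo) or a ray (-oo, m]. Two distinct components cannot both be rays of the same direction.
   By stationarity the disjoint events "the component of k is [k, oo)", k in Z, all have the same
   probability, which must therefore be 0; likewise for the rays (-oo, k]. So almost surely every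
   infinite component is Z, and then one component is finite iff all of them are. *)

lemma int_Least_bounded_below:
  fixes P :: "int \<Rightarrow> bool"
  assumes "P n" and bound: "\<And>m. P m \<Longrightarrow> b \<le> m"
  shows "P (LEAST m. P m)" and "\<And>m. P m \<Longrightarrow> (LEAST m. P m) \<le> m"
proof -
  define d where "d = (LEAST d::nat. P (b + int d))"
  have "P (b + int (nat (n - b)))" using assms by simp
  then have Pd: "P (b + int d)" unfolding d_def by (rule LeastI)
  have le: "b + int d \<le> m" if "P m" for m
  proof -
    have "P (b + int (nat (m - b)))" using that bound[OF that] by simp
    then have "d \<le> nat (m - b)" unfolding d_def by (rule Least_le)
    then show ?thesis using bound[OF that] by linarith
  qed
  have "(LEAST m. P m) = b + int d" using Pd le by (rule Least_equality)
  then show "P (LEAST m. P m)" and "\<And>m. P m \<Longrightarrow> (LEAST m. P m) \<le> m"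
    using Pd le by simp_all
qed

lemma int_Least_shift:
  fixes P :: "int \<Rightarrow> bool"
  assumes "P n" and "\<And>m. P m \<Longrightarrow> b \<le> m"
  shows "(LEAST m. P (m + k)) = (LEAST m. P m) - k"
proof (rule Least_equality)
  show "P ((LEAST m. P m) - k + k)"
    using int_Least_bounded_below(1)[of P n b] assms by simp
  show "(LEAST m. P m) - k \<le> m" if "P (m + k)" for m
    using int_Least_bounded_below(2)[of P n b "m + k"] assms that by simp
qed

lemma sum_int_interval_split:
  fixes x :: "int \<Rightarrow> 'a::comm_monoid_add"
  assumes "i \<le> j" "j \<le> n"
  shows "(\<Sum>l\<in>{i..<n}. x l) = (\<Sum>l\<in>{i..<j}. x l) + (\<Sum>l\<in>{j..<n}. x l)"
  using assms by (simp add: sum.union_disjoint[symmetric] ivl_disj_un ivl_disj_int)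

lemma sum_int_interval_shift:
  "(\<Sum>l\<in>{i..<n}. x (l + k)) = (\<Sum>l\<in>{i + k..<n + k::int}. x l)"
  by (rule sum.reindex_bij_witness[of _ "\<lambda>l. l - k" "\<lambda>l. l + k"]) auto

section \<open>The record map\<close>

lemma record_map_eq_iff:
  "record_map x i = j \<longleftrightarrow>
     (i < j \<and> 0 \<le> (\<Sum>l\<in>{i..<j}. x l) \<and> (\<forall>n. i < n \<and> n < j \<longrightarrow> (\<Sum>l\<in>{i..<n}. x l) < 0))
     \<or> (j = i \<and> \<not> (\<exists>n>i. 0 \<le> (\<Sum>l\<in>{i..<n}. x l)))"
proof (cases "\<exists>n>i. 0 \<le> (\<Sum>l\<in>{i..<n}. x l)")
  case True
  define P where "P n \<longleftrightarrow> i < n \<and> 0 \<le> (\<Sum>l\<in>{i..<n}. x l)" for n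
  from True obtain n where "P n" by (auto simp: P_def)
  then have least: "P (LEAST n. P n)" "\<And>m. P m \<Longrightarrow> (LEAST n. P n) \<le> m"
    using int_Least_bounded_below[of P n i] by (auto simp: P_def)
  have "record_map x i = (LEAST n. P n)"
    using True by (simp add: record_map_def P_def)
  then have "record_map x i = j \<longleftrightarrow> P j \<and> (\<forall>n. n < j \<longrightarrow> \<not> P n)"
    using least by (metis not_le order.antisym)
  then show ?thesis
    using True by (auto simp: P_def not_le)
next
  case False
  then show ?thesis by (auto simp: record_map_def)
qed

lemma record_map_neqD:
  assumes "record_map x i \<noteq> i"
  shows "i < record_map x i" and "0 \<le> (\<Sum>l\<in>{i..<record_map x i}. x l)"
    and "\<And>n. i < n \<Longrightarrow> n < record_map x i \<Longrightarrow> (\<Sum>l\<in>{i..<n}. x l) < 0"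
  using record_map_eq_iff[of x i "record_map x i"] assms by auto

lemma record_map_le_if_sum_nonneg:
  assumes "i < n" and "0 \<le> (\<Sum>l\<in>{i..<n}. x l)"
  shows "record_map x i \<noteq> i" and "record_map x i \<le> n"
proof -
  show ne: "record_map x i \<noteq> i"
    using record_map_eq_iff[of x i i] assms by auto
  show "record_map x i \<le> n"
    using record_map_neqD(3)[OF ne, of n] assms by force
qed

lemma record_map_nested:
  assumes "record_map x i \<noteq> i" and "i < j" and "j < record_map x i"
  shows "record_map x j \<noteq> j" and "record_map x j \<le> record_map x i"
proof -
  have "(\<Sum>l\<in>{i..<j}. x l) < 0"
    using record_map_neqD(3)[OF assms(1)] assms by simp
  then have "0 \<le> (\<Sum>l\<in>{j..<record_map x i}. x l)"
    using record_map_neqD(2)[OF assms(1)] sum_int_interval_split[of i j "record_map x i" x] assms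
    by simp
  then show "record_map x j \<noteq> j" and "record_map x j \<le> record_map x i"
    using record_map_le_if_sum_nonneg assms(3) by blast+
qed

lemma record_map_shift:
  "record_map (\<lambda>n. x (n + k)) i = record_map x (i + k) - k"
proof -
  define P where "P n \<longleftrightarrow> i + k < n \<and> 0 \<le> (\<Sum>l\<in>{i + k..<n}. x l)" for n
  have "i < n \<and> 0 \<le> (\<Sum>l\<in>{i..<n}. x (l + k)) \<longleftrightarrow> P (n + k)" for n
    by (simp add: P_def sum_int_interval_shift)
  then have shifted: "record_map (\<lambda>n. x (n + k)) i = (if \<exists>n. P (n + k) then LEAST n. P (n + k) else i)"
    by (simp only: record_map_def)
  have unshifted: "record_map x (i + k) = (if \<exists>n. P n then LEAST n. P n else i + k)"
    by (simp only: record_map_def P_def)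
  have ex: "(\<exists>n. P (n + k)) \<longleftrightarrow> (\<exists>n. P n)"
    by (metis diff_add_cancel)
  show ?thesis
  proof (cases "\<exists>n. P n")
    case True
    then obtain n where "P n" by blast
    then have "(LEAST m. P (m + k)) = (LEAST m. P m) - k"
      by (rule int_Least_shift[where b = "i + k"]) (simp add: P_def)
    then show ?thesis
      using True ex shifted unshifted by simp
  next
    case False
    then show ?thesis using ex shifted unshifted by simp
  qed
qed

section \<open>Components of the record graph\<close>

definition record_adj :: "(int \<Rightarrow> int) \<Rightarrow> (int \<times> int) set" where
  "record_adj x = record_edges x \<union> (record_edges x)\<inverse>"

lemma record_adj_iff:
  "(i, j) \<in> record_adj x \<longleftrightarrow> i \<noteq> j \<and> (record_map x i = j \<or> record_map x j = i)"
  unfolding record_adj_def record_edges_def by auto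

lemma mem_record_component_iff: "m \<in> record_component x n \<longleftrightarrow> (n, m) \<in> (record_adj x)\<^sup>*"
  unfolding record_component_def record_adj_def by simp

lemma sym_rtrancl_record_adj: "sym ((record_adj x)\<^sup>*)"
  by (rule sym_rtrancl) (auto simp: sym_def record_adj_iff)

lemma record_component_eq:
  assumes "m \<in> record_component x n"
  shows "record_component x m = record_component x n"
  using assms sym_rtrancl_record_adj[of x]
  unfolding mem_record_component_iff set_eq_iff by (meson rtrancl_trans symD)

lemma rtrancl_record_adj_to_record:
  assumes "record_map x i \<noteq> i" and "i < c" and "c \<le> record_map x i"
  shows "(c, record_map x i) \<in> (record_adj x)\<^sup>*"
  using assms(2,3)
proof (induction "nat (record_map x i - c)" arbitrary: c rule: less_induct)
  case less
  show ?case
  proof (cases "c = record_map x i")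
    case False
    then have "c < record_map x i" using less.prems by simp
    then have c: "record_map x c \<noteq> c" "record_map x c \<le> record_map x i"
      using record_map_nested assms(1) less.prems by blast+
    then have "(c, record_map x c) \<in> record_adj x"
      by (simp add: record_adj_iff)
    moreover have "(record_map x c, record_map x i) \<in> (record_adj x)\<^sup>*"
      using less.hyps record_map_neqD(1)[OF c(1)] c(2) less.prems by force
    ultimately show ?thesis by (rule converse_rtrancl_into_rtrancl)
  qed simp
qed

lemma rtrancl_record_adj_interval:
  assumes "(a, b) \<in> (record_adj x)\<^sup>*"
  shows "a < c \<Longrightarrow> c \<le> b \<Longrightarrow> (a, c) \<in> (record_adj x)\<^sup>*"
  using assms
proof (induction arbitrary: c rule: rtrancl_induct)
  case (step y z)
  show ?case
  proof (cases "c \<le> y")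
    case False
    then have "y < c" "c \<le> z" using step.prems by auto
    moreover have "record_map x z \<noteq> y" if "y < z"
      using record_map_neqD(1)[of x z] that by fastforce
    ultimately have z: "z = record_map x y" "record_map x y \<noteq> y"
      using step.hyps(2) by (auto simp: record_adj_iff)
    have "(c, z) \<in> (record_adj x)\<^sup>*"
      using rtrancl_record_adj_to_record[OF z(2)] z(1) \<open>y < c\<close> \<open>c \<le> z\<close> by simp
    then have "(z, c) \<in> (record_adj x)\<^sup>*"
      using sym_rtrancl_record_adj by (rule symD[rotated])
    then show ?thesis
      using step.hyps by (meson rtrancl.rtrancl_into_rtrancl rtrancl_trans)
  qed (use step in auto)
qed simp

lemma record_component_interval:
  assumes "a \<in> record_component x n" "b \<in> record_component x n" "a \<le> c" "c \<le> b"
  shows "c \<in> record_component x n"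
proof (cases "a = c")
  case False
  have "b \<in> record_component x a"
    using assms(2) record_component_eq[OF assms(1)] by simp
  then have "(a, b) \<in> (record_adj x)\<^sup>*"
    by (simp add: mem_record_component_iff)
  then have "c \<in> record_component x a"
    using rtrancl_record_adj_interval False assms(3,4) by (simp add: mem_record_component_iff)
  then show ?thesis
    using record_component_eq[OF assms(1)] by simp
qed (use assms in simp)

lemma infinite_int_interval_cases:
  fixes C :: "int set"
  assumes ivl: "\<And>a b c. a \<in> C \<Longrightarrow> b \<in> C \<Longrightarrow> a \<le> c \<Longrightarrow> c \<le> b \<Longrightarrow> c \<in> C"
    and "infinite C"
  obtains "C = UNIV" | m where "C = {m..}" | m where "C = {..m}"
proof -
  have shapes: "{..<b} = {..b - 1}" "{a<..} = {a + 1..}" for a b :: int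
    by auto
  have "\<exists>a b. C = {} \<or> C = UNIV \<or> C = {..<b} \<or> C = {..b}
      \<or> C = {a<..} \<or> C = {a..} \<or> C = {a<..<b} \<or> C = {a<..b} \<or> C = {a..<b} \<or> C = {a..b}"
    using ivl by (rule interval_cases)
  then show ?thesis
    using that \<open>infinite C\<close> unfolding shapes by (elim exE disjE) simp_all
qed

lemma infinite_record_component_cases:
  assumes "infinite (record_component x n)"
  obtains "record_component x n = UNIV"
    | m where "record_component x m = {m..}"
    | m where "record_component x m = {..m}"
proof -
  let ?C = "record_component x n"
  consider "?C = UNIV" | m where "?C = {m..}" | m where "?C = {..m}"
    by (rule infinite_int_interval_cases[of ?C, OF record_component_interval assms])
  then show ?thesis
  proof cases
    case (2 m)
    then have "record_component x m = {m..}"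
      using record_component_eq[of m x n] by simp
    then show ?thesis by (rule that(2))
  next
    case (3 m)
    then have "record_component x m = {..m}"
      using record_component_eq[of m x n] by simp
    then show ?thesis by (rule that(3))
  qed (rule that(1))
qed

lemma record_component_atLeast_unique:
  assumes "record_component x p = {p..}" and "record_component x q = {q..}"
  shows "p = q"
proof -
  have "q \<in> record_component x p \<or> p \<in> record_component x q"
    using assms by auto
  then have "record_component x p = record_component x q"
    using record_component_eq by metis
  then show ?thesis using assms by simp
qed

lemma record_component_atMost_unique:
  assumes "record_component x p = {..p}" and "record_component x q = {..q}"
  shows "p = q"
proof -
  have "q \<in> record_component x p \<or> p \<in> record_component x q"
    using assms by auto
  then have "record_component x p = record_component x q"
    using record_component_eq by metis
  then show ?thesis using assms by simp
qed

lemma finite_record_component_iff: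
  assumes "\<And>m. record_component x m \<noteq> {m..}" and "\<And>m. record_component x m \<noteq> {..m}"
  shows "finite (record_component x p) \<longleftrightarrow> finite (record_component x q)"
proof -
  have "record_component x q = record_component x p" if "infinite (record_component x p)" for p q
    using that
  proof (cases rule: infinite_record_component_cases)
    case 1
    then show ?thesis by (metis UNIV_I record_component_eq)
  qed (use assms in blast)+
  then show ?thesis by metis
qed

lemma rtrancl_map_pair:
  assumes "\<And>a b. (a, b) \<in> r \<Longrightarrow> (f a, f b) \<in> s"
  shows "(a, b) \<in> r\<^sup>* \<Longrightarrow> (f a, f b) \<in> s\<^sup>*"
  by (induction rule: rtrancl_induct) (auto intro: rtrancl_into_rtrancl assms)

lemma record_adj_shift:
  "(i, j) \<in> record_adj (\<lambda>n. x (n + k)) \<longleftrightarrow> (i + k, j + k) \<in> record_adj x"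
  by (auto simp: record_adj_iff record_map_shift)

lemma record_component_shift:
  "record_component (\<lambda>n. x (n + k)) n = (\<lambda>m. m - k) ` record_component x (n + k)"
proof -
  have "(n, m) \<in> (record_adj (\<lambda>n. x (n + k)))\<^sup>* \<longleftrightarrow> (n + k, m + k) \<in> (record_adj x)\<^sup>*" for m
    using rtrancl_map_pair[of "record_adj (\<lambda>n. x (n + k))" "\<lambda>m. m + k" "record_adj x" n m]
      rtrancl_map_pair[of "record_adj x" "\<lambda>m. m - k" "record_adj (\<lambda>n. x (n + k))" "n + k" "m + k"]
    by (auto simp: record_adj_shift)
  then show ?thesis
    by (force simp: mem_record_component_iff image_iff)
qed

lemma record_component_shift_atLeast_iff:
  "record_component (\<lambda>n. x (n + k)) 0 = {0..} \<longleftrightarrow> record_component x k = {k..}"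
proof -
  have "{0..} = (\<lambda>m. m - k) ` {k..}"
    by (auto intro!: image_eqI[where x = "m + k" for m])
  then show ?thesis
    by (simp add: record_component_shift inj_image_eq_iff inj_def)
qed

lemma record_component_shift_atMost_iff:
  "record_component (\<lambda>n. x (n + k)) 0 = {..0} \<longleftrightarrow> record_component x k = {..k}"
proof -
  have "{..0} = (\<lambda>m. m - k) ` {..k}"
    by (auto intro!: image_eqI[where x = "m + k" for m])
  then show ?thesis
    by (simp add: record_component_shift inj_image_eq_iff inj_def)
qed

section \<open>Measurability\<close>

abbreviation int_seq_space :: "(int \<Rightarrow> int) measure" where
  "int_seq_space \<equiv> PiM UNIV (\<lambda>_. count_space UNIV)"

lemma pred_sum_nonneg[measurable]:
  "Measurable.pred int_seq_space (\<lambda>x. 0 \<le> (\<Sum>l\<in>J. x l))"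
proof -
  \<comment> \<open>the measurability automation handles sums of real-valued functions\<close>
  have "0 \<le> (\<Sum>l\<in>J. x l) \<longleftrightarrow> 0 \<le> (\<Sum>l\<in>J. real_of_int (x l))" for x :: "int \<Rightarrow> int"
    by (simp flip: of_int_sum)
  then show ?thesis by (simp only:) measurable
qed

lemma pred_sum_neg[measurable]:
  "Measurable.pred int_seq_space (\<lambda>x. (\<Sum>l\<in>J. x l) < 0)"
  unfolding not_le[symmetric] by measurable

lemma pred_record_map_eq[measurable]:
  "Measurable.pred int_seq_space (\<lambda>x. record_map x i = j)"
  unfolding record_map_eq_iff by measurable

lemma pred_record_adj[measurable]:
  "Measurable.pred int_seq_space (\<lambda>x. (i, j) \<in> record_adj x)"
  unfolding record_adj_iff by measurable

lemma pred_rtrancl_countable: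
  fixes R :: "'a \<Rightarrow> ('b::countable \<times> 'b) set"
  assumes "\<And>a b. Measurable.pred N (\<lambda>x. (a, b) \<in> R x)"
  shows "Measurable.pred N (\<lambda>x. (a, b) \<in> (R x)\<^sup>*)"
proof -
  have relpow: "Measurable.pred N (\<lambda>x. (a, b) \<in> R x ^^ k)" for k
  proof (induction k arbitrary: b)
    case (Suc k)
    have "(a, b) \<in> R x ^^ Suc k \<longleftrightarrow> (\<exists>c. (a, c) \<in> R x ^^ k \<and> (c, b) \<in> R x)" for x
      by auto
    then show ?case
      by (simp only:) (intro pred_intros_countable pred_intros_logic Suc assms)
  qed simp
  have "(a, b) \<in> (R x)\<^sup>* \<longleftrightarrow> (\<exists>k. (a, b) \<in> R x ^^ k)" for x
    by (simp add: rtrancl_power)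
  then show ?thesis
    by (simp only:) (intro pred_intros_countable relpow)
qed

lemma pred_mem_record_component[measurable]:
  "Measurable.pred int_seq_space (\<lambda>x. m \<in> record_component x n)"
  unfolding mem_record_component_iff by (rule pred_rtrancl_countable) (rule pred_record_adj)

lemma pred_record_component_eq[measurable]:
  "Measurable.pred int_seq_space (\<lambda>x. record_component x n = S)"
  unfolding set_eq_iff by measurable

lemma pred_finite_record_component[measurable]:
  "Measurable.pred int_seq_space (\<lambda>x. finite (record_component x n))"
proof -
  have "finite C \<longleftrightarrow> (\<exists>k. \<forall>m. m \<in> C \<longrightarrow> \<bar>m\<bar> < k)" for C :: "int set"
    unfolding finite_int_iff_bounded by auto
  then show ?thesis by (simp only:) measurable
qed

section \<open>Stationarity\<close>

lemma (in finite_measure) measure_eq_0_if_disjoint_const: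
  fixes A :: "'i \<Rightarrow> 'a set"
  assumes "infinite (UNIV :: 'i set)" and "range A \<subseteq> sets M" and "disjoint_family A"
    and "\<And>i. measure M (A i) = c"
  shows "c = 0"
proof -
  obtain f :: "nat \<Rightarrow> 'i" where "inj f"
    using assms(1) infinite_countable_subset by blast
  then have "disjoint_family (A \<circ> f)"
    using assms(3) by (fastforce simp: disjoint_family_on_def dest: injD)
  then have "(\<lambda>n. measure M (A (f n))) sums measure M (\<Union>n. A (f n))"
    using assms(2) finite_measure_UNION[of "A \<circ> f"] by auto
  then have "summable (\<lambda>n::nat. c)"
    using assms(4) by (simp add: sums_summable)
  then show ?thesis by (simp add: summable_const_iff)
qed

lemma stationary_int_process_measurable:
  assumes "stationary_int_process M X"
  shows "(\<lambda>\<omega> n. X (n + k) \<omega>) \<in> M \<rightarrow>\<^sub>M int_seq_space"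
  using assms unfolding stationary_int_process_def
  by (intro measurable_PiM_single') auto

lemma stationary_int_process_event:
  assumes "stationary_int_process M X" and "Measurable.pred int_seq_space P"
  shows "{\<omega>\<in>space M. P (\<lambda>n. X n \<omega>)} \<in> sets M"
  using measurable_compose[OF stationary_int_process_measurable[OF assms(1), of 0] assms(2)]
  by (simp add: pred_def)

lemma stationary_int_process_measure_shift:
  assumes "stationary_int_process M X" and P: "Measurable.pred int_seq_space P"
  shows "measure M {\<omega>\<in>space M. P (\<lambda>n. X (n + k) \<omega>)} = measure M {\<omega>\<in>space M. P (\<lambda>n. X n \<omega>)}"
proof -
  have S: "{x\<in>space int_seq_space. P x} \<in> sets int_seq_space"
    using P unfolding pred_def .
  have law: "measure M {\<omega>\<in>space M. P (\<lambda>n. X (n + j) \<omega>)}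
      = measure (distr M int_seq_space (\<lambda>\<omega> n. X (n + j) \<omega>)) {x\<in>space int_seq_space. P x}" for j
    using measurable_space[OF stationary_int_process_measurable[OF assms(1)]]
    by (subst measure_distr[OF stationary_int_process_measurable[OF assms(1)] S])
       (auto intro!: arg_cong[where f = "measure M"])
  show ?thesis
    using law[of k] law[of 0] assms(1) unfolding stationary_int_process_def by simp
qed

lemma stationary_int_process_AE_no_unique_position:
  fixes Q :: "(int \<Rightarrow> int) \<Rightarrow> int \<Rightarrow> bool"
  assumes "prob_space M" and X: "stationary_int_process M X"
    and Q: "\<And>k. Measurable.pred int_seq_space (\<lambda>x. Q x k)"
    and shift: "\<And>x k. Q (\<lambda>n. x (n + k)) 0 \<longleftrightarrow> Q x k"
    and unique: "\<And>x k l. Q x k \<Longrightarrow> Q x l \<Longrightarrow> k = l"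
  shows "AE \<omega> in M. \<forall>k. \<not> Q (\<lambda>n. X n \<omega>) k"
proof -
  interpret prob_space M by fact
  define A where "A k = {\<omega>\<in>space M. Q (\<lambda>n. X n \<omega>) k}" for k
  have sets: "A k \<in> sets M" for k
    unfolding A_def using X Q by (rule stationary_int_process_event)
  have "measure M (A k) = measure M (A 0)" for k
  proof -
    have "Q (\<lambda>n. X n \<omega>) k \<longleftrightarrow> Q (\<lambda>n. X (n + k) \<omega>) 0" for \<omega>
      using shift[of "\<lambda>n. X n \<omega>" k] by simp
    then have "measure M (A k) = measure M {\<omega>\<in>space M. Q (\<lambda>n. X (n + k) \<omega>) 0}"
      unfolding A_def by simp
    also have "\<dots> = measure M (A 0)"
      unfolding A_def by (rule stationary_int_process_measure_shift[OF X Q])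
    finally show ?thesis .
  qed
  moreover have "disjoint_family A"
    using unique by (fastforce simp: disjoint_family_on_def A_def)
  ultimately have "measure M (A 0) = 0"
    using sets by (intro measure_eq_0_if_disjoint_const[of A]) auto
  then have "AE \<omega> in M. \<omega> \<notin> A k" for k
    using sets \<open>measure M (A k) = measure M (A 0)\<close>
    by (intro AE_not_in) (simp add: null_sets_def emeasure_eq_measure)
  then show ?thesis
    by (simp add: AE_all_countable A_def)
qed

theorem lemma3p3:
  fixes M :: "'a measure" and X :: "int \<Rightarrow> 'a \<Rightarrow> int"
  assumes "prob_space M"
    and "stationary_int_process M X"
  shows "measure M {\<omega> \<in> space M. finite (record_component (\<lambda>n. X n \<omega>) 0)}
           = measure M {\<omega> \<in> space M. \<forall>n\<ge>1. finite (record_component (\<lambda>k. X k \<omega>) n)}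
       \<and> measure M {\<omega> \<in> space M. \<forall>n\<ge>1. finite (record_component (\<lambda>k. X k \<omega>) n)}
           = measure M {\<omega> \<in> space M. \<forall>n\<le>-1. finite (record_component (\<lambda>k. X k \<omega>) n)}"
proof -
  interpret prob_space M by fact
  have "AE \<omega> in M. \<forall>m. record_component (\<lambda>n. X n \<omega>) m \<noteq> {m..}"
    using stationary_int_process_AE_no_unique_position[OF assms, of "\<lambda>x m. record_component x m = {m..}"]
    by (simp add: record_component_shift_atLeast_iff record_component_atLeast_unique)
  moreover have "AE \<omega> in M. \<forall>m. record_component (\<lambda>n. X n \<omega>) m \<noteq> {..m}"
    using stationary_int_process_AE_no_unique_position[OF assms, of "\<lambda>x m. record_component x m = {..m}"]
    by (simp add: record_component_shift_atMost_iff record_component_atMost_unique)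
  ultimately have "AE \<omega> in M. \<forall>p. finite (record_component (\<lambda>n. X n \<omega>) p)
      \<longleftrightarrow> finite (record_component (\<lambda>n. X n \<omega>) 0)"
    by eventually_elim (intro allI finite_record_component_iff; blast)
  then have "AE \<omega> in M. (finite (record_component (\<lambda>n. X n \<omega>) 0)
        \<longleftrightarrow> (\<forall>n\<ge>1. finite (record_component (\<lambda>k. X k \<omega>) n)))
      \<and> ((\<forall>n\<ge>1. finite (record_component (\<lambda>k. X k \<omega>) n))
        \<longleftrightarrow> (\<forall>n\<le>-1. finite (record_component (\<lambda>k. X k \<omega>) n)))"
    by eventually_elim (metis order_refl)
  moreover have "{\<omega> \<in> space M. finite (record_component (\<lambda>n. X n \<omega>) 0)} \<in> sets M"
    and "{\<omega> \<in> space M. \<forall>n\<ge>1. finite (record_component (\<lambda>k. X k \<omega>) n)} \<in> sets M"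
    and "{\<omega> \<in> space M. \<forall>n\<le>-1. finite (record_component (\<lambda>k. X k \<omega>) n)} \<in> sets M"
    using stationary_int_process_event[OF assms(2), of "\<lambda>x. finite (record_component x 0)"]
      stationary_int_process_event[OF assms(2), of "\<lambda>x. \<forall>n\<ge>1. finite (record_component x n)"]
      stationary_int_process_event[OF assms(2), of "\<lambda>x. \<forall>n\<le>-1. finite (record_component x n)"]
    by simp_all
  ultimately show ?thesis
    by (intro conjI measure_eq_AE) (auto elim: AE_mp)
qed

end
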